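(* Let $\mathcal{C}$ and $\mathcal{C}'$ be semigroupal categories and let $(F,J)\colon \mathcal{C}\to\mathcal{C}'$ be a semigroupal equivalence. Then for any left (respectively right, respectively two-sided) ideal $\mathcal{I}$ of $\mathcal{C}$, the subcategory $\overline{F(\mathcal{I})}$ is a left (respectively right, respectively two-sided) ideal of $\mathcal{C}'$. Moreover, $F$ restricts to an equivalence of categories between $\mathcal{I}$ and $\overline{F(\mathcal{I})}$.
   Context: A semigroupal category is a category $\mathcal{C}$ with a tensor product functor $\otimes\colon\mathcal{C}\times\mathcal{C}\to\mathcal{C}$ and an associator natural isomorphism $a$ satisfying the pentagon axiom (no unit object is required); throughout, semigroupal categories may be taken strict. A semigroupal functor is a pair $(F,J)$ where $F\colon\mathcal{C}\to\mathcal{C}'$ is a functor and $J\colon F(-)\otimes' F(-)\Rightarrow F(-\otimes -)$ is a natural isomorphism compatible with the associators (hexagon axiom). A semigroupal equivalence is a semigroupal functor $(F,J)$ with $F$ an equivalence of categories (so $F$ is full and $F(\mathcal{I})$ is a subcategory). A subcategory $\mathcal{D}$ of $\mathcal{C}$ is closed under isomorphisms if for every object $X$ of $\mathcal{D}$ and every isomorphism $\varphi\colon X\to X'$ in $\mathcal{C}$, both $X'$ and $\varphi$ lie in $\mathcal{D}$; the isomorphism closure $\overline{\mathcal{D}}$ is the smallest subcategory of $\mathcal{C}$ containing $\mathcal{D}$ and closed under isomorphisms (its objects are those isomorphic to objects of $\mathcal{D}$, and a morphism $\varphi'\colon X'\to Y'$ lies in $\overline{\mathcal{D}}$ iff there are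 objects $X,Y$ of $\mathcal{D}$, isomorphisms $\mu\colon X\to X'$, $\nu\colon Y\to Y'$ in $\mathcal{C}$ and a morphism $\varphi\colon X\to Y$ in $\mathcal{D}$ with $\nu\circ\varphi=\varphi'\circ\mu$). A left (resp. right) ideal of a semigroupal category $\mathcal{C}$ is a subcategory $\mathcal{I}$ closed under isomorphisms such that $Y\otimes X$ (resp. $X\otimes Y$) is an object of $\mathcal{I}$ for all objects $X$ of $\mathcal{I}$ and $Y$ of $\mathcal{C}$; an ideal is a subcategory that is both a left and a right ideal. *)

theory Defs
  imports Main
begin

record ('o,'a) cat =
  Ob :: "'o set"
  Ar :: "'a set"
  Dom :: "'a \<Rightarrow> 'o"
  Cod :: "'a \<Rightarrow> 'o"
  Idt :: "'o \<Rightarrow> 'a"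
  Comp :: "'a \<Rightarrow> 'a \<Rightarrow> 'a"   (* Comp C g f = g \<circ> f *)

definition hom :: "('o,'a,'x) cat_scheme \<Rightarrow> 'o \<Rightarrow> 'o \<Rightarrow> 'a set" where
  "hom C x y = {f \<in> Ar C. Dom C f = x \<and> Cod C f = y}"

definition category :: "('o,'a,'x) cat_scheme \<Rightarrow> bool" where
  "category C \<longleftrightarrow>
     (\<forall>f\<in>Ar C. Dom C f \<in> Ob C \<and> Cod C f \<in> Ob C) \<and>
     (\<forall>x\<in>Ob C. Idt C x \<in> hom C x x) \<and>
     (\<forall>f\<in>Ar C. \<forall>g\<in>Ar C. Cod C f = Dom C g \<longrightarrow> Comp C g f \<in> hom C (Dom C f) (Cod C g)) \<and>
     (\<forall>f\<in>Ar C. Comp C f (Idt C (Dom C f)) = f \<and> Comp C (Idt C (Cod C f)) f = f) \<and>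
     (\<forall>f\<in>Ar C. \<forall>g\<in>Ar C. \<forall>h\<in>Ar C. Cod C f = Dom C g \<longrightarrow> Cod C g = Dom C h \<longrightarrow>
        Comp C h (Comp C g f) = Comp C (Comp C h g) f)"

definition iso :: "('o,'a,'x) cat_scheme \<Rightarrow> 'a \<Rightarrow> bool" where
  "iso C f \<longleftrightarrow> f \<in> Ar C \<and> (\<exists>g\<in>hom C (Cod C f) (Dom C f).
      Comp C g f = Idt C (Dom C f) \<and> Comp C f g = Idt C (Cod C f))"

definition cat_functor :: "('o,'a,'x) cat_scheme \<Rightarrow> ('p,'b,'y) cat_scheme \<Rightarrow>
    ('o \<Rightarrow> 'p) \<Rightarrow> ('a \<Rightarrow> 'b) \<Rightarrow> bool" where
  "cat_functor C D FO FA \<longleftrightarrow> category C \<and> category D \<and>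
     (\<forall>x\<in>Ob C. FO x \<in> Ob D) \<and>
     (\<forall>f\<in>Ar C. FA f \<in> hom D (FO (Dom C f)) (FO (Cod C f))) \<and>
     (\<forall>x\<in>Ob C. FA (Idt C x) = Idt D (FO x)) \<and>
     (\<forall>f\<in>Ar C. \<forall>g\<in>Ar C. Cod C f = Dom C g \<longrightarrow> FA (Comp C g f) = Comp D (FA g) (FA f))"

definition nat_iso :: "('o,'a,'x) cat_scheme \<Rightarrow> ('p,'b,'y) cat_scheme \<Rightarrow>
    ('o \<Rightarrow> 'p) \<Rightarrow> ('a \<Rightarrow> 'b) \<Rightarrow> ('o \<Rightarrow> 'p) \<Rightarrow> ('a \<Rightarrow> 'b) \<Rightarrow> ('o \<Rightarrow> 'b) \<Rightarrow> bool" where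
  "nat_iso C D F1O F1A F2O F2A \<eta> \<longleftrightarrow>
     cat_functor C D F1O F1A \<and> cat_functor C D F2O F2A \<and>
     (\<forall>x\<in>Ob C. \<eta> x \<in> hom D (F1O x) (F2O x) \<and> iso D (\<eta> x)) \<and>
     (\<forall>f\<in>Ar C. Comp D (\<eta> (Cod C f)) (F1A f) = Comp D (F2A f) (\<eta> (Dom C f)))"

definition cat_equivalence :: "('o,'a,'x) cat_scheme \<Rightarrow> ('p,'b,'y) cat_scheme \<Rightarrow>
    ('o \<Rightarrow> 'p) \<Rightarrow> ('a \<Rightarrow> 'b) \<Rightarrow> bool" where
  "cat_equivalence C D FO FA \<longleftrightarrow> cat_functor C D FO FA \<and>
     (\<exists>(GO :: 'p \<Rightarrow> 'o) (GA :: 'b \<Rightarrow> 'a) \<eta> \<epsilon>. cat_functor D C GO GA \<and>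
        nat_iso C C (\<lambda>x. x) (\<lambda>f. f) (GO \<circ> FO) (GA \<circ> FA) \<eta> \<and>
        nat_iso D D (FO \<circ> GO) (FA \<circ> GA) (\<lambda>x. x) (\<lambda>f. f) \<epsilon>)"

definition subcategory :: "('o,'a,'x) cat_scheme \<Rightarrow> 'o set \<times> 'a set \<Rightarrow> bool" where
  "subcategory C S \<longleftrightarrow> fst S \<subseteq> Ob C \<and> snd S \<subseteq> Ar C \<and>
     (\<forall>f\<in>snd S. Dom C f \<in> fst S \<and> Cod C f \<in> fst S) \<and>
     (\<forall>x\<in>fst S. Idt C x \<in> snd S) \<and>
     (\<forall>f\<in>snd S. \<forall>g\<in>snd S. Cod C f = Dom C g \<longrightarrow> Comp C g f \<in> snd S)"

definition restrict_cat :: "('o,'a,'x) cat_scheme \<Rightarrow> 'o set \<times> 'a set \<Rightarrow> ('o,'a,'x) cat_scheme" where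
  "restrict_cat C S = C\<lparr>Ob := fst S, Ar := snd S\<rparr>"

definition iso_closed :: "('o,'a,'x) cat_scheme \<Rightarrow> 'o set \<times> 'a set \<Rightarrow> bool" where
  "iso_closed C S \<longleftrightarrow> (\<forall>x\<in>fst S. \<forall>\<phi>. iso C \<phi> \<and> Dom C \<phi> = x \<longrightarrow> Cod C \<phi> \<in> fst S \<and> \<phi> \<in> snd S)"

definition iso_closure :: "('o,'a,'x) cat_scheme \<Rightarrow> 'o set \<times> 'a set \<Rightarrow> 'o set \<times> 'a set" where
  "iso_closure C D =
    (\<Inter>{fst E | E. subcategory C E \<and> iso_closed C E \<and> fst D \<subseteq> fst E \<and> snd D \<subseteq> snd E},
     \<Inter>{snd E | E. subcategory C E \<and> iso_closed C E \<and> fst D \<subseteq> fst E \<and> snd D \<subseteq> snd E})"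

definition image_subcat :: "('o \<Rightarrow> 'p) \<Rightarrow> ('a \<Rightarrow> 'b) \<Rightarrow> 'o set \<times> 'a set \<Rightarrow> 'p set \<times> 'b set" where
  "image_subcat FO FA S = (FO ` fst S, FA ` snd S)"

record ('o,'a) scat = "('o,'a) cat" +
  TensO :: "'o \<Rightarrow> 'o \<Rightarrow> 'o"
  TensA :: "'a \<Rightarrow> 'a \<Rightarrow> 'a"
  Assoc :: "'o \<Rightarrow> 'o \<Rightarrow> 'o \<Rightarrow> 'a"   (* a_{x,y,z} : (x*y)*z -> x*(y*z) *)

definition semigroupal_category :: "('o,'a,'x) scat_scheme \<Rightarrow> bool" where
  "semigroupal_category C \<longleftrightarrow> category C \<and>
     \<comment> \<open>tensor is a bifunctor\<close>
     (\<forall>x\<in>Ob C. \<forall>y\<in>Ob C. TensO C x y \<in> Ob C) \<and>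
     (\<forall>f\<in>Ar C. \<forall>g\<in>Ar C. TensA C f g \<in>
        hom C (TensO C (Dom C f) (Dom C g)) (TensO C (Cod C f) (Cod C g))) \<and>
     (\<forall>x\<in>Ob C. \<forall>y\<in>Ob C. TensA C (Idt C x) (Idt C y) = Idt C (TensO C x y)) \<and>
     (\<forall>f\<in>Ar C. \<forall>g\<in>Ar C. \<forall>f'\<in>Ar C. \<forall>g'\<in>Ar C. Cod C f = Dom C g \<longrightarrow> Cod C f' = Dom C g' \<longrightarrow>
        TensA C (Comp C g f) (Comp C g' f') = Comp C (TensA C g g') (TensA C f f')) \<and>
     \<comment> \<open>associator is a natural isomorphism\<close>
     (\<forall>x\<in>Ob C. \<forall>y\<in>Ob C. \<forall>z\<in>Ob C.
        Assoc C x y z \<in> hom C (TensO C (TensO C x y) z) (TensO C x (TensO C y z)) \<and>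
        iso C (Assoc C x y z)) \<and>
     (\<forall>f\<in>Ar C. \<forall>g\<in>Ar C. \<forall>h\<in>Ar C.
        Comp C (Assoc C (Cod C f) (Cod C g) (Cod C h)) (TensA C (TensA C f g) h) =
        Comp C (TensA C f (TensA C g h)) (Assoc C (Dom C f) (Dom C g) (Dom C h))) \<and>
     \<comment> \<open>pentagon\<close>
     (\<forall>w\<in>Ob C. \<forall>x\<in>Ob C. \<forall>y\<in>Ob C. \<forall>z\<in>Ob C.
        Comp C (Assoc C w x (TensO C y z)) (Assoc C (TensO C w x) y z) =
        Comp C (TensA C (Idt C w) (Assoc C x y z))
          (Comp C (Assoc C w (TensO C x y) z) (TensA C (Assoc C w x y) (Idt C z))))"

definition semigroupal_functor :: "('o,'a,'x) scat_scheme \<Rightarrow> ('p,'b,'y) scat_scheme \<Rightarrow>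
    ('o \<Rightarrow> 'p) \<Rightarrow> ('a \<Rightarrow> 'b) \<Rightarrow> ('o \<Rightarrow> 'o \<Rightarrow> 'b) \<Rightarrow> bool" where
  "semigroupal_functor C D FO FA J \<longleftrightarrow>
     semigroupal_category C \<and> semigroupal_category D \<and> cat_functor C D FO FA \<and>
     (\<forall>x\<in>Ob C. \<forall>y\<in>Ob C. J x y \<in> hom D (TensO D (FO x) (FO y)) (FO (TensO C x y)) \<and>
        iso D (J x y)) \<and>
     (\<forall>f\<in>Ar C. \<forall>g\<in>Ar C.
        Comp D (J (Cod C f) (Cod C g)) (TensA D (FA f) (FA g)) =
        Comp D (FA (TensA C f g)) (J (Dom C f) (Dom C g))) \<and>
     \<comment> \<open>hexagon\<close>
     (\<forall>x\<in>Ob C. \<forall>y\<in>Ob C. \<forall>z\<in>Ob C.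
        Comp D (FA (Assoc C x y z))
          (Comp D (J (TensO C x y) z) (TensA D (J x y) (Idt D (FO z)))) =
        Comp D (J x (TensO C y z))
          (Comp D (TensA D (Idt D (FO x)) (J y z)) (Assoc D (FO x) (FO y) (FO z))))"

definition semigroupal_equivalence :: "('o,'a,'x) scat_scheme \<Rightarrow> ('p,'b,'y) scat_scheme \<Rightarrow>
    ('o \<Rightarrow> 'p) \<Rightarrow> ('a \<Rightarrow> 'b) \<Rightarrow> ('o \<Rightarrow> 'o \<Rightarrow> 'b) \<Rightarrow> bool" where
  "semigroupal_equivalence C D FO FA J \<longleftrightarrow>
     semigroupal_functor C D FO FA J \<and> cat_equivalence C D FO FA"

definition left_ideal :: "('o,'a,'x) scat_scheme \<Rightarrow> 'o set \<times> 'a set \<Rightarrow> bool" where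
  "left_ideal C I \<longleftrightarrow> subcategory C I \<and> iso_closed C I \<and>
     (\<forall>x\<in>fst I. \<forall>y\<in>Ob C. TensO C y x \<in> fst I)"

definition right_ideal :: "('o,'a,'x) scat_scheme \<Rightarrow> 'o set \<times> 'a set \<Rightarrow> bool" where
  "right_ideal C I \<longleftrightarrow> subcategory C I \<and> iso_closed C I \<and>
     (\<forall>x\<in>fst I. \<forall>y\<in>Ob C. TensO C x y \<in> fst I)"

definition two_sided_ideal :: "('o,'a,'x) scat_scheme \<Rightarrow> 'o set \<times> 'a set \<Rightarrow> bool" where
  "two_sided_ideal C I \<longleftrightarrow> left_ideal C I \<and> right_ideal C I"

end

theory Submission
  imports Defs
begin

text \<open>Let \<open>G\<close> be a quasi-inverse of \<open>F\<close> with unit \<open>\<eta> : Id \<Rightarrow> G F\<close> and counit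
  \<open>\<epsilon> : F G \<Rightarrow> Id\<close>. The isomorphism closure of \<open>F(I)\<close> is the preimage \<open>G\<^sup>-\<^sup>1(I)\<close>: this
  preimage is an isomorphism-closed subcategory, it contains \<open>F(I)\<close> because \<open>G F x \<cong> x\<close>
  via \<open>\<eta>\<close>, and each of its objects and arrows is isomorphic, via \<open>\<epsilon>\<close>, to the image under \<open>F\<close>
  of one in \<open>I\<close>. Restricting \<open>F\<close>, \<open>G\<close>, \<open>\<eta>\<close>, \<open>\<epsilon>\<close> to \<open>I\<close> and \<open>G\<^sup>-\<^sup>1(I)\<close> gives the
  equivalence. For the ideal property, \<open>Y \<otimes> X \<cong> F G Y \<otimes> F G X \<cong> F (G Y \<otimes> G X)\<close> by \<open>\<epsilon>\<close>
  and \<open>J\<close>, and \<open>G Y \<otimes> G X\<close> lies in \<open>I\<close> whenever \<open>G X\<close> does.\<close>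

lemma restrict_cat_simps [simp]:
  "Ob (restrict_cat C S) = fst S" "Ar (restrict_cat C S) = snd S"
  "Dom (restrict_cat C S) = Dom C" "Cod (restrict_cat C S) = Cod C"
  "Idt (restrict_cat C S) = Idt C" "Comp (restrict_cat C S) = Comp C"
  by (simp_all add: restrict_cat_def)

lemma iso_arrow: "iso C f \<Longrightarrow> f \<in> Ar C"
  unfolding iso_def by blast

context
  fixes C :: "('o,'a,'x) cat_scheme"
  assumes cat: "category C"
begin

lemma cat_Dom_in_Ob: "f \<in> Ar C \<Longrightarrow> Dom C f \<in> Ob C"
  using cat unfolding category_def by blast

lemma cat_Cod_in_Ob: "f \<in> Ar C \<Longrightarrow> Cod C f \<in> Ob C"
  using cat unfolding category_def by blast

lemma cat_Idt_arrow: "x \<in> Ob C \<Longrightarrow> Idt C x \<in> Ar C \<and> Dom C (Idt C x) = x \<and> Cod C (Idt C x) = x"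
  using cat unfolding category_def hom_def by blast

lemma cat_Comp_arrow:
  "f \<in> Ar C \<Longrightarrow> g \<in> Ar C \<Longrightarrow> Cod C f = Dom C g \<Longrightarrow>
   Comp C g f \<in> Ar C \<and> Dom C (Comp C g f) = Dom C f \<and> Cod C (Comp C g f) = Cod C g"
  using cat unfolding category_def hom_def by blast

lemma cat_Comp_Idt_right: "f \<in> Ar C \<Longrightarrow> Comp C f (Idt C (Dom C f)) = f"
  using cat unfolding category_def by blast

lemma cat_Comp_Idt_left: "f \<in> Ar C \<Longrightarrow> Comp C (Idt C (Cod C f)) f = f"
  using cat unfolding category_def by blast

lemma cat_Comp_assoc:
  "f \<in> Ar C \<Longrightarrow> g \<in> Ar C \<Longrightarrow> h \<in> Ar C \<Longrightarrow> Cod C f = Dom C g \<Longrightarrow> Cod C g = Dom C h \<Longrightarrow>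
   Comp C h (Comp C g f) = Comp C (Comp C h g) f"
  using cat unfolding category_def by blast

lemma iso_inverseE:
  assumes "iso C f"
  obtains g where "g \<in> Ar C" "Dom C g = Cod C f" "Cod C g = Dom C f"
    "Comp C g f = Idt C (Dom C f)" "Comp C f g = Idt C (Cod C f)" "iso C g"
proof -
  obtain g where g: "g \<in> hom C (Cod C f) (Dom C f)"
    "Comp C g f = Idt C (Dom C f)" "Comp C f g = Idt C (Cod C f)"
    using assms unfolding iso_def by blast
  have "iso C g"
    using g assms unfolding iso_def hom_def by auto
  with g that show ?thesis
    unfolding hom_def by blast
qed

lemma iso_Comp:
  assumes f: "iso C f" and g: "iso C g" and fg: "Cod C f = Dom C g"
  shows "iso C (Comp C g f)"
proof -
  obtain f' where f': "f' \<in> Ar C" "Dom C f' = Cod C f" "Cod C f' = Dom C f"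
      "Comp C f' f = Idt C (Dom C f)" "Comp C f f' = Idt C (Cod C f)"
    using iso_inverseE[OF f] by blast
  obtain g' where g': "g' \<in> Ar C" "Dom C g' = Cod C g" "Cod C g' = Dom C g"
      "Comp C g' g = Idt C (Dom C g)" "Comp C g g' = Idt C (Cod C g)"
    using iso_inverseE[OF g] by blast
  have fa: "f \<in> Ar C" and ga: "g \<in> Ar C"
    using f g by (auto intro: iso_arrow)
  have gf: "Comp C g f \<in> Ar C" "Dom C (Comp C g f) = Dom C f" "Cod C (Comp C g f) = Cod C g"
    using cat_Comp_arrow[OF fa ga fg] by auto
  have f'g': "Comp C f' g' \<in> Ar C" "Dom C (Comp C f' g') = Cod C g" "Cod C (Comp C f' g') = Dom C f"
    using cat_Comp_arrow[OF g'(1) f'(1)] g' f' fg by auto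
  have "Comp C (Comp C f' g') (Comp C g f) = Comp C f' (Comp C (Comp C g' g) f)"
    using cat_Comp_assoc[OF gf(1) g'(1) f'(1)] cat_Comp_assoc[OF fa ga g'(1)] gf g' f' fg by metis
  also have "\<dots> = Idt C (Dom C f)"
    using g'(4) fg f'(4) cat_Comp_Idt_left[OF fa] by simp
  finally have left: "Comp C (Comp C f' g') (Comp C g f) = Idt C (Dom C (Comp C g f))"
    using gf by simp
  have "Comp C (Comp C g f) (Comp C f' g') = Comp C g (Comp C (Comp C f f') g')"
    using cat_Comp_assoc[OF f'g'(1) fa ga] cat_Comp_assoc[OF g'(1) f'(1) fa] f'g' f' g' fg by metis
  also have "\<dots> = Idt C (Cod C g)"
    using f'(5) fg g'(3,5) cat_Comp_Idt_left[OF g'(1)] by simp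
  finally have right: "Comp C (Comp C g f) (Comp C f' g') = Idt C (Cod C (Comp C g f))"
    using gf by simp
  show ?thesis
    unfolding iso_def hom_def using gf f'g' left right by auto
qed

lemma category_restrict_cat: "subcategory C S \<Longrightarrow> category (restrict_cat C S)"
  using cat unfolding subcategory_def category_def hom_def by (simp add: subset_iff)

lemma iso_restrict_cat:
  assumes "subcategory C S" "iso_closed C S" "Dom C f \<in> fst S" "iso C f"
  shows "iso (restrict_cat C S) f"
proof -
  obtain g where g: "g \<in> Ar C" "Dom C g = Cod C f" "Cod C g = Dom C f"
      "Comp C g f = Idt C (Dom C f)" "Comp C f g = Idt C (Cod C f)" "iso C g"
    using iso_inverseE[OF assms(4)] by blast
  have "f \<in> snd S" "Cod C f \<in> fst S"
    using assms unfolding iso_closed_def by blast+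
  moreover have "g \<in> snd S"
    using assms g calculation unfolding iso_closed_def by metis
  ultimately show ?thesis
    using g unfolding iso_def hom_def by auto
qed

text \<open>Here \<open>g = v \<circ> f \<circ> u\<^sup>-\<^sup>1\<close>, and \<open>u\<^sup>-\<^sup>1\<close>, \<open>v\<close> lie in \<open>S\<close> because their domains do.\<close>
lemma iso_closed_transport:
  assumes S: "subcategory C S" "iso_closed C S" and f: "f \<in> snd S"
    and u: "iso C u" "Dom C u = Dom C f" and v: "iso C v" "Dom C v = Cod C f"
    and g: "g \<in> Ar C" "Dom C g = Cod C u" "Cod C g = Cod C v"
    and square: "Comp C v f = Comp C g u"
  shows "g \<in> snd S"
proof -
  obtain u' where u': "u' \<in> Ar C" "Dom C u' = Cod C u" "Cod C u' = Dom C u"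
      "Comp C u u' = Idt C (Cod C u)" "iso C u'"
    using iso_inverseE[OF u(1)] by blast
  have fa: "f \<in> Ar C" "Dom C f \<in> fst S" "Cod C f \<in> fst S"
    using S f unfolding subcategory_def by blast+
  have ua: "u \<in> Ar C" and va: "v \<in> Ar C"
    using u v by (auto intro: iso_arrow)
  have "g = Comp C g (Comp C u u')"
    using u'(4) g cat_Comp_Idt_right[OF g(1)] by simp
  also have "\<dots> = Comp C (Comp C v f) u'"
    using cat_Comp_assoc[OF u'(1) ua g(1)] u' g square by simp
  finally have g_eq: "g = Comp C (Comp C v f) u'" .
  have "Cod C u \<in> fst S"
    using S(2) fa(2) u unfolding iso_closed_def by blast
  then have "u' \<in> snd S"
    using S(2) u' unfolding iso_closed_def by blast
  moreover have "v \<in> snd S"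
    using S(2) fa(3) v unfolding iso_closed_def by blast
  ultimately show ?thesis
    using S(1) f fa u' u v g_eq cat_Comp_arrow[OF fa(1) va]
    unfolding subcategory_def by (metis (no_types, lifting))
qed

end

lemma iso_closure_eqI:
  assumes "subcategory C E" "iso_closed C E" "fst S \<subseteq> fst E" "snd S \<subseteq> snd E"
    and least: "\<And>E'. subcategory C E' \<Longrightarrow> iso_closed C E' \<Longrightarrow> fst S \<subseteq> fst E' \<Longrightarrow> snd S \<subseteq> snd E' \<Longrightarrow>
      fst E \<subseteq> fst E' \<and> snd E \<subseteq> snd E'"
  shows "iso_closure C S = E"
proof -
  let ?P = "\<lambda>E'. subcategory C E' \<and> iso_closed C E' \<and> fst S \<subseteq> fst E' \<and> snd S \<subseteq> snd E'"
  have "\<Inter>{fst E' | E'. ?P E'} = fst E" "\<Inter>{snd E' | E'. ?P E'} = snd E"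
    using assms by (blast intro!: antisym)+
  then show ?thesis
    unfolding iso_closure_def by (simp add: prod_eq_iff)
qed

section \<open>Functors and natural isomorphisms\<close>

lemma cat_functor_category: "cat_functor C D FO FA \<Longrightarrow> category C \<and> category D"
  unfolding cat_functor_def by blast

lemma cat_functor_Ob: "cat_functor C D FO FA \<Longrightarrow> x \<in> Ob C \<Longrightarrow> FO x \<in> Ob D"
  unfolding cat_functor_def by blast

lemma cat_functor_Ar:
  "cat_functor C D FO FA \<Longrightarrow> f \<in> Ar C \<Longrightarrow>
   FA f \<in> Ar D \<and> Dom D (FA f) = FO (Dom C f) \<and> Cod D (FA f) = FO (Cod C f)"
  unfolding cat_functor_def hom_def by blast

lemma cat_functor_Idt: "cat_functor C D FO FA \<Longrightarrow> x \<in> Ob C \<Longrightarrow> FA (Idt C x) = Idt D (FO x)"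
  unfolding cat_functor_def by blast

lemma cat_functor_Comp:
  "cat_functor C D FO FA \<Longrightarrow> f \<in> Ar C \<Longrightarrow> g \<in> Ar C \<Longrightarrow> Cod C f = Dom C g \<Longrightarrow>
   FA (Comp C g f) = Comp D (FA g) (FA f)"
  unfolding cat_functor_def by blast

lemma cat_functor_iso:
  assumes F: "cat_functor C D FO FA" and f: "iso C f"
  shows "iso D (FA f)"
proof -
  have cC: "category C"
    using F cat_functor_category by blast
  obtain g where g: "g \<in> Ar C" "Dom C g = Cod C f" "Cod C g = Dom C f"
      "Comp C g f = Idt C (Dom C f)" "Comp C f g = Idt C (Cod C f)"
    using iso_inverseE[OF cC f] by blast
  have fa: "f \<in> Ar C"
    using f by (rule iso_arrow)
  have "Comp D (FA g) (FA f) = Idt D (Dom D (FA f))"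
    using cat_functor_Comp[OF F fa g(1)] cat_functor_Idt[OF F] cat_Dom_in_Ob[OF cC fa]
      cat_functor_Ar[OF F fa] g by simp
  moreover have "Comp D (FA f) (FA g) = Idt D (Cod D (FA f))"
    using cat_functor_Comp[OF F g(1) fa] cat_functor_Idt[OF F] cat_Cod_in_Ob[OF cC fa]
      cat_functor_Ar[OF F fa] g by simp
  ultimately show ?thesis
    unfolding iso_def hom_def using cat_functor_Ar[OF F fa] cat_functor_Ar[OF F g(1)] g by auto
qed

lemma cat_functor_restrict_cat:
  assumes "cat_functor C D FO FA" "subcategory C S" "subcategory D T"
    "\<And>x. x \<in> fst S \<Longrightarrow> FO x \<in> fst T" "\<And>f. f \<in> snd S \<Longrightarrow> FA f \<in> snd T"
  shows "cat_functor (restrict_cat C S) (restrict_cat D T) FO FA"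
proof -
  have "category C" "category D"
    using assms(1) cat_functor_category by blast+
  then have "category (restrict_cat C S)" "category (restrict_cat D T)"
    using assms(2,3) category_restrict_cat by blast+
  then show ?thesis
    using assms
    unfolding cat_functor_def hom_def subcategory_def by (simp add: subset_iff)
qed

lemma nat_iso_component:
  "nat_iso C D F1O F1A F2O F2A \<eta> \<Longrightarrow> x \<in> Ob C \<Longrightarrow>
   \<eta> x \<in> Ar D \<and> Dom D (\<eta> x) = F1O x \<and> Cod D (\<eta> x) = F2O x \<and> iso D (\<eta> x)"
  unfolding nat_iso_def hom_def by blast

lemma nat_iso_naturality:
  "nat_iso C D F1O F1A F2O F2A \<eta> \<Longrightarrow> f \<in> Ar C \<Longrightarrow>
   Comp D (\<eta> (Cod C f)) (F1A f) = Comp D (F2A f) (\<eta> (Dom C f))"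
  unfolding nat_iso_def by blast

lemma nat_iso_restrict_cat:
  assumes \<eta>: "nat_iso C D F1O F1A F2O F2A \<eta>"
    and S: "subcategory C S" and T: "subcategory D T" "iso_closed D T"
    and "\<And>x. x \<in> fst S \<Longrightarrow> F1O x \<in> fst T" "\<And>f. f \<in> snd S \<Longrightarrow> F1A f \<in> snd T"
    and "\<And>x. x \<in> fst S \<Longrightarrow> F2O x \<in> fst T" "\<And>f. f \<in> snd S \<Longrightarrow> F2A f \<in> snd T"
  shows "nat_iso (restrict_cat C S) (restrict_cat D T) F1O F1A F2O F2A \<eta>"
proof -
  have cD: "category D"
    using \<eta> cat_functor_category unfolding nat_iso_def by blast
  have "cat_functor (restrict_cat C S) (restrict_cat D T) F1O F1A"
    "cat_functor (restrict_cat C S) (restrict_cat D T) F2O F2A"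
    using cat_functor_restrict_cat assms unfolding nat_iso_def by blast+
  moreover have "\<eta> x \<in> hom (restrict_cat D T) (F1O x) (F2O x) \<and> iso (restrict_cat D T) (\<eta> x)"
    if x: "x \<in> fst S" for x
  proof -
    have "x \<in> Ob C"
      using x S unfolding subcategory_def by blast
    then have "\<eta> x \<in> hom D (F1O x) (F2O x)" "iso D (\<eta> x)"
      using \<eta> unfolding nat_iso_def by auto
    moreover from this have "iso (restrict_cat D T) (\<eta> x)"
      using iso_restrict_cat[OF cD T] assms(5)[OF x] unfolding hom_def by auto
    ultimately show ?thesis
      unfolding hom_def iso_def by auto
  qed
  ultimately show ?thesis
    using \<eta> S unfolding nat_iso_def subcategory_def by (auto simp: subset_iff)
qed

definition preimage_subcat :: "('p,'b,'y) cat_scheme \<Rightarrow> ('p \<Rightarrow> 'o) \<Rightarrow> ('b \<Rightarrow> 'a) \<Rightarrow>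
    'o set \<times> 'a set \<Rightarrow> 'p set \<times> 'b set" where
  "preimage_subcat D GO GA S = ({X \<in> Ob D. GO X \<in> fst S}, {f \<in> Ar D. GA f \<in> snd S})"

lemma subcategory_preimage_subcat:
  assumes G: "cat_functor D C GO GA" and S: "subcategory C S"
  shows "subcategory D (preimage_subcat D GO GA S)"
proof -
  have cD: "category D"
    using G cat_functor_category by blast
  have "Dom D f \<in> Ob D \<and> GO (Dom D f) \<in> fst S \<and> Cod D f \<in> Ob D \<and> GO (Cod D f) \<in> fst S"
    if "f \<in> Ar D" "GA f \<in> snd S" for f
    using that S cat_functor_Ar[OF G] cat_Dom_in_Ob[OF cD] cat_Cod_in_Ob[OF cD]
    unfolding subcategory_def by metis
  moreover have "Idt D x \<in> Ar D \<and> GA (Idt D x) \<in> snd S" if "x \<in> Ob D" "GO x \<in> fst S" for x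
    using that S cat_Idt_arrow[OF cD] cat_functor_Idt[OF G] unfolding subcategory_def by metis
  moreover have "Comp D g f \<in> Ar D \<and> GA (Comp D g f) \<in> snd S"
    if "f \<in> Ar D" "GA f \<in> snd S" "g \<in> Ar D" "GA g \<in> snd S" "Cod D f = Dom D g" for f g
    using that S cat_Comp_arrow[OF cD] cat_functor_Comp[OF G] cat_functor_Ar[OF G]
    unfolding subcategory_def by metis
  ultimately show ?thesis
    unfolding subcategory_def preimage_subcat_def by auto
qed

lemma iso_closed_preimage_subcat:
  assumes G: "cat_functor D C GO GA" and S: "iso_closed C S"
  shows "iso_closed D (preimage_subcat D GO GA S)"
proof -
  have cD: "category D"
    using G cat_functor_category by blast
  have "Cod D \<phi> \<in> Ob D \<and> GO (Cod D \<phi>) \<in> fst S \<and> \<phi> \<in> Ar D \<and> GA \<phi> \<in> snd S"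
    if "GO x \<in> fst S" "iso D \<phi>" "Dom D \<phi> = x" for x \<phi>
    using that S cat_functor_iso[OF G] cat_functor_Ar[OF G] iso_arrow cat_Cod_in_Ob[OF cD]
    unfolding iso_closed_def by metis
  then show ?thesis
    unfolding iso_closed_def preimage_subcat_def by auto
qed

section \<open>Equivalences and isomorphism-closed subcategories\<close>

locale cat_equivalence_data =
  fixes C :: "('o,'a,'x) cat_scheme" and D :: "('p,'b,'y) cat_scheme"
    and FO :: "'o \<Rightarrow> 'p" and FA :: "'a \<Rightarrow> 'b" and GO :: "'p \<Rightarrow> 'o" and GA :: "'b \<Rightarrow> 'a"
    and \<eta> :: "'o \<Rightarrow> 'a" and \<epsilon> :: "'p \<Rightarrow> 'b"
  assumes F: "cat_functor C D FO FA" and G: "cat_functor D C GO GA"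
    and unit: "nat_iso C C (\<lambda>x. x) (\<lambda>f. f) (GO \<circ> FO) (GA \<circ> FA) \<eta>"
    and counit: "nat_iso D D (FO \<circ> GO) (FA \<circ> GA) (\<lambda>x. x) (\<lambda>f. f) \<epsilon>"

lemma cat_equivalence_dataE:
  assumes "cat_equivalence C D FO FA"
  obtains GO GA \<eta> \<epsilon> where "cat_equivalence_data C D FO FA GO GA \<eta> \<epsilon>"
  using assms unfolding cat_equivalence_def cat_equivalence_data_def by blast

context cat_equivalence_data
begin

lemma cat_equivalence: "cat_equivalence C D FO FA"
  unfolding cat_equivalence_def using F G unit counit by blast

context
  fixes I :: "'o set \<times> 'a set"
  assumes subI: "subcategory C I" and isoI: "iso_closed C I"
begin

lemma FO_in_preimage_subcat:
  assumes x: "x \<in> fst I"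
  shows "FO x \<in> fst (preimage_subcat D GO GA I)"
proof -
  have "x \<in> Ob C"
    using x subI unfolding subcategory_def by blast
  then have "GO (FO x) \<in> fst I"
    using x isoI nat_iso_component[OF unit] unfolding iso_closed_def by fastforce
  with \<open>x \<in> Ob C\<close> show ?thesis
    unfolding preimage_subcat_def by (simp add: cat_functor_Ob[OF F])
qed

lemma FA_in_preimage_subcat:
  assumes f: "f \<in> snd I"
  shows "FA f \<in> snd (preimage_subcat D GO GA I)"
proof -
  have fa: "f \<in> Ar C" "Dom C f \<in> Ob C" "Cod C f \<in> Ob C"
    using f subI unfolding subcategory_def by blast+
  have "GA (FA f) \<in> snd I"
  proof (rule iso_closed_transport[OF _ subI isoI f])
    show "category C"
      using F cat_functor_category by blast
    show "Comp C (\<eta> (Cod C f)) f = Comp C (GA (FA f)) (\<eta> (Dom C f))"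
      using nat_iso_naturality[OF unit fa(1)] by simp
  qed (use fa nat_iso_component[OF unit] cat_functor_Ar[OF F] cat_functor_Ar[OF G] in auto)
  then show ?thesis
    unfolding preimage_subcat_def using cat_functor_Ar[OF F fa(1)] by simp
qed

lemma preimage_subcat_least:
  assumes E: "subcategory D E" "iso_closed D E"
    and image: "fst (image_subcat FO FA I) \<subseteq> fst E" "snd (image_subcat FO FA I) \<subseteq> snd E"
  shows "fst (preimage_subcat D GO GA I) \<subseteq> fst E \<and> snd (preimage_subcat D GO GA I) \<subseteq> snd E"
proof -
  have cD: "category D"
    using F cat_functor_category by blast
  have ob: "X \<in> fst E" if "X \<in> Ob D" "GO X \<in> fst I" for X
  proof -
    have "FO (GO X) \<in> fst E"
      using image(1) that(2) unfolding image_subcat_def by auto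
    then show ?thesis
      using E(2) nat_iso_component[OF counit that(1)] unfolding iso_closed_def by (metis comp_apply)
  qed
  have "f \<in> snd E" if f: "f \<in> Ar D" "GA f \<in> snd I" for f
  proof (rule iso_closed_transport[OF cD E])
    show "FA (GA f) \<in> snd E"
      using image(2) f(2) unfolding image_subcat_def by auto
    show "Comp D (\<epsilon> (Cod D f)) (FA (GA f)) = Comp D f (\<epsilon> (Dom D f))"
      using nat_iso_naturality[OF counit f(1)] by simp
  qed (use f cat_Dom_in_Ob[OF cD] cat_Cod_in_Ob[OF cD] nat_iso_component[OF counit]
        cat_functor_Ar[OF F] cat_functor_Ar[OF G] in auto)
  with ob show ?thesis
    unfolding preimage_subcat_def by auto
qed

lemma iso_closure_image_subcat_eq: "iso_closure D (image_subcat FO FA I) = preimage_subcat D GO GA I"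
proof (rule iso_closure_eqI)
  show "subcategory D (preimage_subcat D GO GA I)"
    using G subI by (rule subcategory_preimage_subcat)
  show "iso_closed D (preimage_subcat D GO GA I)"
    using G isoI by (rule iso_closed_preimage_subcat)
  show "fst (image_subcat FO FA I) \<subseteq> fst (preimage_subcat D GO GA I)"
    "snd (image_subcat FO FA I) \<subseteq> snd (preimage_subcat D GO GA I)"
    unfolding image_subcat_def using FO_in_preimage_subcat FA_in_preimage_subcat by auto
qed (rule preimage_subcat_least)

lemma cat_equivalence_restrict_preimage_subcat:
  "cat_equivalence (restrict_cat C I) (restrict_cat D (preimage_subcat D GO GA I)) FO FA"
proof -
  let ?E = "preimage_subcat D GO GA I"
  have E: "subcategory D ?E" "iso_closed D ?E"
    using subcategory_preimage_subcat[OF G subI] iso_closed_preimage_subcat[OF G isoI] .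
  have GF_ob: "GO (FO x) \<in> fst I" if "x \<in> fst I" for x
    using FO_in_preimage_subcat[OF that] unfolding preimage_subcat_def by simp
  have GF_ar: "GA (FA f) \<in> snd I" if "f \<in> snd I" for f
    using FA_in_preimage_subcat[OF that] unfolding preimage_subcat_def by simp
  have E_ob: "FO (GO X) \<in> fst ?E" if "X \<in> fst ?E" for X
    using that FO_in_preimage_subcat unfolding preimage_subcat_def by auto
  have E_ar: "FA (GA f) \<in> snd ?E" if "f \<in> snd ?E" for f
    using that FA_in_preimage_subcat unfolding preimage_subcat_def by auto
  have "cat_equivalence_data (restrict_cat C I) (restrict_cat D ?E) FO FA GO GA \<eta> \<epsilon>"
  proof
    show "cat_functor (restrict_cat C I) (restrict_cat D ?E) FO FA"
      by (rule cat_functor_restrict_cat[OF F subI E(1) FO_in_preimage_subcat FA_in_preimage_subcat])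
    show "cat_functor (restrict_cat D ?E) (restrict_cat C I) GO GA"
      by (rule cat_functor_restrict_cat[OF G E(1) subI]) (simp_all add: preimage_subcat_def)
    show "nat_iso (restrict_cat C I) (restrict_cat C I) (\<lambda>x. x) (\<lambda>f. f) (GO \<circ> FO) (GA \<circ> FA) \<eta>"
      by (rule nat_iso_restrict_cat[OF unit subI subI isoI]) (simp_all add: GF_ob GF_ar)
    show "nat_iso (restrict_cat D ?E) (restrict_cat D ?E) (FO \<circ> GO) (FA \<circ> GA) (\<lambda>x. x) (\<lambda>f. f) \<epsilon>"
      by (rule nat_iso_restrict_cat[OF counit E(1) E]) (simp_all add: E_ob E_ar)
  qed
  then show ?thesis
    by (rule cat_equivalence_data.cat_equivalence)
qed

end

end

lemma cat_equivalence_restrict_iso_closure: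
  assumes "cat_equivalence C D FO FA" "subcategory C I" "iso_closed C I"
  shows "cat_equivalence (restrict_cat C I) (restrict_cat D (iso_closure D (image_subcat FO FA I))) FO FA"
proof -
  obtain GO GA \<eta> \<epsilon> where "cat_equivalence_data C D FO FA GO GA \<eta> \<epsilon>"
    using assms(1) by (rule cat_equivalence_dataE)
  then interpret cat_equivalence_data C D FO FA GO GA \<eta> \<epsilon> .
  show ?thesis
    using assms(2,3) iso_closure_image_subcat_eq cat_equivalence_restrict_preimage_subcat by simp
qed

section \<open>Semigroupal categories\<close>

context
  fixes D :: "('p,'b,'y) scat_scheme"
  assumes sD: "semigroupal_category D"
begin

lemma TensA_arrow:
  "f \<in> Ar D \<Longrightarrow> g \<in> Ar D \<Longrightarrow> TensA D f g \<in> Ar D \<and>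
   Dom D (TensA D f g) = TensO D (Dom D f) (Dom D g) \<and> Cod D (TensA D f g) = TensO D (Cod D f) (Cod D g)"
  using sD unfolding semigroupal_category_def hom_def by blast

lemma TensA_Idt: "x \<in> Ob D \<Longrightarrow> y \<in> Ob D \<Longrightarrow> TensA D (Idt D x) (Idt D y) = Idt D (TensO D x y)"
  using sD unfolding semigroupal_category_def by blast

lemma TensA_Comp:
  "f \<in> Ar D \<Longrightarrow> g \<in> Ar D \<Longrightarrow> f' \<in> Ar D \<Longrightarrow> g' \<in> Ar D \<Longrightarrow> Cod D f = Dom D g \<Longrightarrow> Cod D f' = Dom D g' \<Longrightarrow>
   TensA D (Comp D g f) (Comp D g' f') = Comp D (TensA D g g') (TensA D f f')"
  using sD unfolding semigroupal_category_def by blast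

lemma iso_TensA:
  assumes f: "iso D f" and g: "iso D g"
  shows "iso D (TensA D f g)"
proof -
  have cD: "category D"
    using sD unfolding semigroupal_category_def by blast
  obtain f' where f': "f' \<in> Ar D" "Dom D f' = Cod D f" "Cod D f' = Dom D f"
      "Comp D f' f = Idt D (Dom D f)" "Comp D f f' = Idt D (Cod D f)"
    using iso_inverseE[OF cD f] by blast
  obtain g' where g': "g' \<in> Ar D" "Dom D g' = Cod D g" "Cod D g' = Dom D g"
      "Comp D g' g = Idt D (Dom D g)" "Comp D g g' = Idt D (Cod D g)"
    using iso_inverseE[OF cD g] by blast
  have fa: "f \<in> Ar D" and ga: "g \<in> Ar D"
    using f g by (auto intro: iso_arrow)
  have "Comp D (TensA D f' g') (TensA D f g) = Idt D (TensO D (Dom D f) (Dom D g))"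
    using TensA_Comp[OF fa f'(1) ga g'(1)] f' g' TensA_Idt cat_Dom_in_Ob[OF cD] fa ga by simp
  moreover have "Comp D (TensA D f g) (TensA D f' g') = Idt D (TensO D (Cod D f) (Cod D g))"
    using TensA_Comp[OF f'(1) fa g'(1) ga] f' g' TensA_Idt cat_Cod_in_Ob[OF cD] fa ga by simp
  ultimately show ?thesis
    unfolding iso_def hom_def using TensA_arrow[OF fa ga] TensA_arrow[OF f'(1) g'(1)] f' g' by auto
qed

end

text \<open>The object \<open>X \<otimes> Y\<close> is isomorphic to \<open>F (G X \<otimes> G Y)\<close> via \<open>(\<epsilon>\<^sub>X \<otimes> \<epsilon>\<^sub>Y) \<circ> J\<^sup>-\<^sup>1\<close>.\<close>
lemma TensO_in_preimage_subcat:
  assumes J: "semigroupal_functor C D FO FA J"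
    and eqv: "cat_equivalence_data C D FO FA GO GA \<eta> \<epsilon>"
    and I: "subcategory C I" "iso_closed C I"
    and X: "X \<in> Ob D" and Y: "Y \<in> Ob D" and XY: "TensO C (GO X) (GO Y) \<in> fst I"
  shows "TensO D X Y \<in> fst (preimage_subcat D GO GA I)"
proof -
  interpret cat_equivalence_data C D FO FA GO GA \<eta> \<epsilon>
    by (rule eqv)
  have sD: "semigroupal_category D"
    using J unfolding semigroupal_functor_def by blast
  have cD: "category D"
    using F cat_functor_category by blast
  let ?J = "J (GO X) (GO Y)"
  have "?J \<in> hom D (TensO D (FO (GO X)) (FO (GO Y))) (FO (TensO C (GO X) (GO Y)))" "iso D ?J"
    using J cat_functor_Ob[OF G] X Y unfolding semigroupal_functor_def by blast+
  then obtain J' where J': "J' \<in> Ar D" "iso D J'"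
      "Dom D J' = FO (TensO C (GO X) (GO Y))" "Cod D J' = TensO D (FO (GO X)) (FO (GO Y))"
    using iso_inverseE[OF cD, of ?J] unfolding hom_def by auto
  have \<epsilon>: "\<epsilon> Z \<in> Ar D \<and> Dom D (\<epsilon> Z) = FO (GO Z) \<and> Cod D (\<epsilon> Z) = Z \<and> iso D (\<epsilon> Z)" if "Z \<in> Ob D" for Z
    using nat_iso_component[OF counit that] by simp
  let ?\<phi> = "Comp D (TensA D (\<epsilon> X) (\<epsilon> Y)) J'"
  have "iso D ?\<phi>"
    using iso_Comp[OF cD J'(2) iso_TensA[OF sD]] \<epsilon> X Y TensA_arrow[OF sD] J' by simp
  moreover have "Dom D ?\<phi> = FO (TensO C (GO X) (GO Y))" "Cod D ?\<phi> = TensO D X Y"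
    using cat_Comp_arrow[OF cD J'(1)] TensA_arrow[OF sD] \<epsilon> X Y J' by simp_all
  moreover have "FO (TensO C (GO X) (GO Y)) \<in> fst (preimage_subcat D GO GA I)"
    using FO_in_preimage_subcat[OF I XY] .
  ultimately show ?thesis
    using iso_closed_preimage_subcat[OF G I(2)] unfolding iso_closed_def by force
qed

lemma iso_closure_image_subcat_preimageE:
  assumes FJ: "semigroupal_equivalence C D FO FA J" and I: "subcategory C I" "iso_closed C I"
  obtains GO :: "'p \<Rightarrow> 'o" where
    "subcategory D (iso_closure D (image_subcat FO FA I))"
    "iso_closed D (iso_closure D (image_subcat FO FA I))"
    "\<And>X. X \<in> Ob D \<Longrightarrow> GO X \<in> Ob C"
    "\<And>X. X \<in> fst (iso_closure D (image_subcat FO FA I)) \<longleftrightarrow> X \<in> Ob D \<and> GO X \<in> fst I"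
    "\<And>X Y. X \<in> Ob D \<Longrightarrow> Y \<in> Ob D \<Longrightarrow> TensO C (GO X) (GO Y) \<in> fst I \<Longrightarrow>
      TensO D X Y \<in> fst (iso_closure D (image_subcat FO FA I))"
proof -
  have J: "semigroupal_functor C D FO FA J"
    using FJ unfolding semigroupal_equivalence_def by blast
  obtain GO GA \<eta> \<epsilon> where eqv: "cat_equivalence_data C D FO FA GO GA \<eta> \<epsilon>"
    using FJ cat_equivalence_dataE unfolding semigroupal_equivalence_def by blast
  interpret cat_equivalence_data C D FO FA GO GA \<eta> \<epsilon>
    by (rule eqv)
  show ?thesis
  proof
    show "subcategory D (iso_closure D (image_subcat FO FA I))"
      "iso_closed D (iso_closure D (image_subcat FO FA I))"
      unfolding iso_closure_image_subcat_eq[OF I]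
      using subcategory_preimage_subcat[OF G I(1)] iso_closed_preimage_subcat[OF G I(2)] .
  qed (use iso_closure_image_subcat_eq[OF I] TensO_in_preimage_subcat[OF J eqv I] cat_functor_Ob[OF G]
       in \<open>simp_all add: preimage_subcat_def\<close>)
qed

lemma left_ideal_iso_closure_image_subcat:
  assumes FJ: "semigroupal_equivalence C D FO FA J" and I: "left_ideal C I"
  shows "left_ideal D (iso_closure D (image_subcat FO FA I))"
proof -
  have "subcategory C I" "iso_closed C I"
    using I unfolding left_ideal_def by blast+
  then show ?thesis
    by (rule iso_closure_image_subcat_preimageE[OF FJ]) (use I in \<open>auto simp: left_ideal_def\<close>)
qed

lemma right_ideal_iso_closure_image_subcat:
  assumes FJ: "semigroupal_equivalence C D FO FA J" and I: "right_ideal C I"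
  shows "right_ideal D (iso_closure D (image_subcat FO FA I))"
proof -
  have "subcategory C I" "iso_closed C I"
    using I unfolding right_ideal_def by blast+
  then show ?thesis
    by (rule iso_closure_image_subcat_preimageE[OF FJ]) (use I in \<open>auto simp: right_ideal_def\<close>)
qed

theorem lemma2p10:
  fixes C :: "('o,'a) scat" and C' :: "('p,'b) scat"
    and FO :: "'o \<Rightarrow> 'p" and FA :: "'a \<Rightarrow> 'b" and J :: "'o \<Rightarrow> 'o \<Rightarrow> 'b"
    and I :: "'o set \<times> 'a set"
  assumes "semigroupal_equivalence C C' FO FA J"
  shows "(left_ideal C I \<longrightarrow> left_ideal C' (iso_closure C' (image_subcat FO FA I))) \<and>
         (right_ideal C I \<longrightarrow> right_ideal C' (iso_closure C' (image_subcat FO FA I))) \<and>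
         (two_sided_ideal C I \<longrightarrow> two_sided_ideal C' (iso_closure C' (image_subcat FO FA I))) \<and>
         ((left_ideal C I \<or> right_ideal C I) \<longrightarrow>
            cat_equivalence (restrict_cat C I)
              (restrict_cat C' (iso_closure C' (image_subcat FO FA I))) FO FA)"
proof -
  have "cat_equivalence C C' FO FA"
    using assms unfolding semigroupal_equivalence_def by blast
  then have "left_ideal C I \<or> right_ideal C I \<Longrightarrow>
      cat_equivalence (restrict_cat C I) (restrict_cat C' (iso_closure C' (image_subcat FO FA I))) FO FA"
    using cat_equivalence_restrict_iso_closure unfolding left_ideal_def right_ideal_def by blast
  then show ?thesis
    using left_ideal_iso_closure_image_subcat[OF assms] right_ideal_iso_closure_image_subcat[OF assms]
    unfolding two_sided_ideal_def by blast
qed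

end
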